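(* Let $S$ be a $d\times d$ sample covariance matrix, $\rho\ge0$, and let $\widehat K^\rho$ be the (unique) minimizer over positive definite $K$ of $-\log\det K+\operatorname{tr}(SK)+\rho\sum_{i\neq j}\max\{0,K_{ij}\}$ (the positive graphical lasso). Let $\widehat G^\rho=(V,\widehat E^\rho)$ be the graph on $V=\{1,\dots,d\}$ with edge $ij$ iff $\widehat K^\rho_{ij}\ne0$, and define the modified sample covariance $S^\rho$ by $S^\rho_{ii}=S_{ii}$ and, for $i\ne j$, $S^\rho_{ij}=S_{ij}$ if $\widehat K^\rho_{ij}\le0$ and $S^\rho_{ij}=S_{ij}+\rho$ if $\widehat K^\rho_{ij}>0$. Then $\widehat K^\rho$ is the maximum likelihood estimator under the Gaussian graphical model determined by $\widehat G^\rho$ based on $S^\rho$, i.e. $\widehat K^\rho$ is the unique positive definite matrix $K$ with $K_{ij}=0$ for $ij\notin\widehat E^\rho$ ($i\ne j$) and $(K^{-1})_{ij}=S^\rho_{ij}$ for $i=j$ and for $ij\in\widehat E^\rho$. *)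

theory Defs
  imports "HOL-Analysis.Analysis"
begin

definition sample_mean :: "nat \<Rightarrow> (nat \<Rightarrow> real^'n) \<Rightarrow> real^'n" where
  "sample_mean N X = (1 / real N) *\<^sub>R (\<Sum>k=1..N. X k)"

definition sample_cov :: "nat \<Rightarrow> (nat \<Rightarrow> real^'n) \<Rightarrow> real^'n^'n" where
  "sample_cov N X = (\<chi> i j. (1 / real N) *
      (\<Sum>k=1..N. (X k $ i - sample_mean N X $ i) * (X k $ j - sample_mean N X $ j)))"

definition pos_def :: "real^'n^'n \<Rightarrow> bool" where
  "pos_def K \<longleftrightarrow> transpose K = K \<and> (\<forall>x. x \<noteq> 0 \<longrightarrow> x \<bullet> (K *v x) > 0)"

definition pglasso_obj :: "real^'n^'n \<Rightarrow> real \<Rightarrow> real^'n^'n \<Rightarrow> real" where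
  "pglasso_obj S \<rho> K = - ln (det K) + trace (S ** K)
      + \<rho> * (\<Sum>i\<in>UNIV. \<Sum>j\<in>UNIV. if i \<noteq> j then max 0 (K $ i $ j) else 0)"

definition is_pglasso_minimizer :: "real^'n^'n \<Rightarrow> real \<Rightarrow> real^'n^'n \<Rightarrow> bool" where
  "is_pglasso_minimizer S \<rho> K \<longleftrightarrow> pos_def K \<and>
     (\<forall>K'. pos_def K' \<longrightarrow> pglasso_obj S \<rho> K \<le> pglasso_obj S \<rho> K')"

definition supp_edges :: "real^'n^'n \<Rightarrow> ('n \<times> 'n) set" where
  "supp_edges K = {(i, j). i \<noteq> j \<and> K $ i $ j \<noteq> 0}"

definition mod_cov :: "real^'n^'n \<Rightarrow> real \<Rightarrow> real^'n^'n \<Rightarrow> real^'n^'n" where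
  "mod_cov S \<rho> K = (\<chi> i j. if i \<noteq> j \<and> K $ i $ j > 0 then S $ i $ j + \<rho> else S $ i $ j)"

definition ggm_mle_cond :: "('n \<times> 'n) set \<Rightarrow> real^'n^'n \<Rightarrow> real^'n^'n \<Rightarrow> bool" where
  "ggm_mle_cond E T K \<longleftrightarrow> pos_def K
     \<and> (\<forall>i j. i \<noteq> j \<and> (i, j) \<notin> E \<longrightarrow> K $ i $ j = 0)
     \<and> (\<forall>i j. (i = j \<or> (i, j) \<in> E) \<longrightarrow> matrix_inv K $ i $ j = T $ i $ j)"

definition is_ggm_mle :: "('n \<times> 'n) set \<Rightarrow> real^'n^'n \<Rightarrow> real^'n^'n \<Rightarrow> bool" where
  "is_ggm_mle E T K \<longleftrightarrow> ggm_mle_cond E T K \<and> (\<forall>K'. ggm_mle_cond E T K' \<longrightarrow> K' = K)"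

end

theory Submission
  imports Defs
begin

(* Let H_ij be the symmetric matrix with ones exactly at (i,j) and (j,i). At the minimizer K, the
   objective restricted to the line K + t H_ij is differentiable at t = 0 whenever i = j or
   K_ij <> 0, because the penalty is then locally linear in t, with slope 2 rho if K_ij > 0 and
   slope 0 otherwise. Since the derivative of log det along this line is tr (K^-1 H_ij),
   stationarity says exactly that (K^-1)_ij = S^rho_ij on the diagonal and on the edges of the
   support graph. These likelihood equations of the graphical model have at most one positive
   definite solution: if K and K' both solve them, then D = K' - K vanishes off the edges while
   K^-1 - K'^-1 = K^-1 D K'^-1 vanishes on them, so tr (D K^-1 D K'^-1) = 0, which forces D = 0
   because K^-1 and K'^-1 are positive definite. *)

section \<open>Positive definite matrices\<close>

lemma transpose_eq_self_sym:
  fixes A :: "real^'n^'n"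
  assumes "transpose A = A"
  shows "A $ j $ i = A $ i $ j"
  using assms by (metis transpose_def vec_lambda_beta)

lemma pos_def_sym:
  fixes K :: "real^'n^'n"
  assumes "pos_def K"
  shows "K $ j $ i = K $ i $ j"
  using assms by (simp add: pos_def_def transpose_eq_self_sym)

lemma pos_def_invertible:
  fixes K :: "real^'n^'n"
  assumes "pos_def K"
  shows "invertible K"
proof -
  have "K *v x = 0 \<Longrightarrow> x = 0" for x
    using assms unfolding pos_def_def by (metis inner_zero_right less_irrefl)
  then show ?thesis
    using matrix_left_invertible_ker invertible_left_inverse by blast
qed

lemma
  fixes A :: "real^'n^'n"
  assumes "invertible A"
  shows matrix_inv_right: "A ** matrix_inv A = mat 1"
    and matrix_inv_left: "matrix_inv A ** A = mat 1"
  using someI_ex[OF assms[unfolded invertible_def]] by (simp_all add: matrix_inv_def)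

lemma pos_def_matrix_inv:
  fixes K :: "real^'n^'n"
  assumes "pos_def K"
  shows "pos_def (matrix_inv K)"
  unfolding pos_def_def
proof (intro conjI allI impI)
  let ?P = "matrix_inv K"
  have inv: "invertible K" by (rule pos_def_invertible[OF assms])
  have "transpose K = K" using assms by (simp add: pos_def_def)
  then have "transpose ?P ** K = mat 1"
    by (metis matrix_inv_right[OF inv] matrix_transpose_mul transpose_mat)
  then show "transpose ?P = ?P"
    by (metis matrix_inv_right[OF inv] matrix_mul_assoc matrix_mul_lid matrix_mul_rid)
  fix x :: "real^'n"
  assume "x \<noteq> 0"
  define y where "y = ?P *v x"
  have Ky: "K *v y = x"
    by (simp add: y_def matrix_vector_mul_assoc matrix_inv_right[OF inv])
  then have "y \<noteq> 0" using \<open>x \<noteq> 0\<close> by auto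
  then have "0 < y \<bullet> (K *v y)" using assms by (simp add: pos_def_def)
  also have "y \<bullet> (K *v y) = x \<bullet> (?P *v x)" unfolding Ky by (simp add: y_def inner_commute)
  finally show "0 < x \<bullet> (?P *v x)" .
qed

lemma quadratic_form_insert:
  fixes A :: "'a \<Rightarrow> 'a \<Rightarrow> real"
  assumes "finite I" "m \<notin> I" and sym: "\<And>a b. A a b = A b a"
  shows "(\<Sum>a\<in>insert m I. \<Sum>b\<in>insert m I. x a * A a b * x b)
    = A m m * (x m)\<^sup>2 + 2 * x m * (\<Sum>b\<in>I. A m b * x b) + (\<Sum>a\<in>I. \<Sum>b\<in>I. x a * A a b * x b)"
proof -
  have "(\<Sum>a\<in>I. x a * A a m * x m) = x m * (\<Sum>b\<in>I. A m b * x b)"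
    by (simp add: sum_distrib_left sym mult_ac)
  then show ?thesis
    using assms(1,2) by (simp add: sum.distrib sum_distrib_left power2_eq_square mult_ac)
qed

lemma pivot_pos_on:
  fixes A :: "'a \<Rightarrow> 'a \<Rightarrow> real"
  assumes "finite I" "m \<notin> I" and sym: "\<And>a b. A a b = A b a"
    and pd: "\<And>x. \<exists>a\<in>insert m I. x a \<noteq> 0
      \<Longrightarrow> 0 < (\<Sum>a\<in>insert m I. \<Sum>b\<in>insert m I. x a * A a b * x b)"
  shows "0 < A m m"
  using pd[of "\<lambda>a. if a \<in> I then 0 else 1"] \<open>m \<notin> I\<close>
  unfolding quadratic_form_insert[OF assms(1,2) sym] by simp

lemma Schur_complement_pos_on:
  fixes A :: "'a \<Rightarrow> 'a \<Rightarrow> real"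
  assumes "finite I" "m \<notin> I" and sym: "\<And>a b. A a b = A b a"
    and pd: "\<And>x. \<exists>a\<in>insert m I. x a \<noteq> 0
      \<Longrightarrow> 0 < (\<Sum>a\<in>insert m I. \<Sum>b\<in>insert m I. x a * A a b * x b)"
    and "\<exists>a\<in>I. x a \<noteq> 0"
  shows "0 < (\<Sum>a\<in>I. \<Sum>b\<in>I. x a * (A a b - A a m * A m b / A m m) * x b)"
proof -
  define \<alpha> where "\<alpha> = A m m"
  have "0 < \<alpha>" unfolding \<alpha>_def using assms(1,2) sym pd by (rule pivot_pos_on)
  define s where "s = (\<Sum>b\<in>I. A m b * x b)"
  \<comment> \<open>Completing the square in the coordinate m.\<close>
  define y where "y = x(m := - s / \<alpha>)"
  have y_I: "y b = x b" if "b \<in> I" for b using that \<open>m \<notin> I\<close> by (auto simp: y_def)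
  have "\<exists>a\<in>insert m I. y a \<noteq> 0"
    using \<open>\<exists>a\<in>I. x a \<noteq> 0\<close> y_I by auto
  then have "0 < (\<Sum>a\<in>insert m I. \<Sum>b\<in>insert m I. y a * A a b * y b)"
    by (rule pd)
  also have "\<dots> = (\<Sum>a\<in>I. \<Sum>b\<in>I. x a * A a b * x b) - s\<^sup>2 / \<alpha>"
  proof -
    have lin: "(\<Sum>b\<in>I. A m b * y b) = s"
      unfolding s_def by (rule sum.cong) (simp_all add: y_I)
    have rest: "(\<Sum>a\<in>I. \<Sum>b\<in>I. y a * A a b * y b) = (\<Sum>a\<in>I. \<Sum>b\<in>I. x a * A a b * x b)"
      by (intro sum.cong) (simp_all add: y_I)
    have ym: "y m = - s / \<alpha>" by (simp add: y_def)
    show ?thesis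
      using \<open>0 < \<alpha>\<close>
      unfolding quadratic_form_insert[OF assms(1,2) sym] lin rest ym \<alpha>_def[symmetric]
      by (simp add: power2_eq_square field_simps)
  qed
  also have "\<dots> = (\<Sum>a\<in>I. \<Sum>b\<in>I. x a * (A a b - A a m * A m b / A m m) * x b)"
  proof -
    have "(\<Sum>a\<in>I. \<Sum>b\<in>I. (x a * A m a) * (A m b * x b)) = s\<^sup>2"
      by (simp add: s_def power2_eq_square sum_product mult.commute)
    then show ?thesis
      using sym by (simp add: \<alpha>_def algebra_simps sum_subtractf sum_divide_distrib[symmetric])
  qed
  finally show ?thesis .
qed

lemma Gram_decomposition_on:
  fixes A :: "'a \<Rightarrow> 'a \<Rightarrow> real"
  assumes "finite I" and "\<And>a b. A a b = A b a"
    and "\<And>x. \<exists>a\<in>I. x a \<noteq> 0 \<Longrightarrow> 0 < (\<Sum>a\<in>I. \<Sum>b\<in>I. x a * A a b * x b)"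
  shows "\<exists>v. \<forall>a\<in>I. \<forall>b\<in>I. A a b = (\<Sum>k\<in>I. v k a * v k b)"
  using assms
proof (induction I arbitrary: A rule: finite_induct)
  case empty
  then show ?case by simp
next
  case (insert m I)
  define \<alpha> where "\<alpha> = A m m"
  have "0 < \<alpha>" unfolding \<alpha>_def using insert.hyps insert.prems by (rule pivot_pos_on)
  define A' where "A' a b = A a b - A a m * A m b / \<alpha>" for a b
  have "\<exists>v. \<forall>a\<in>I. \<forall>b\<in>I. A' a b = (\<Sum>k\<in>I. v k a * v k b)"
  proof (rule insert.IH)
    show "A' a b = A' b a" for a b
      using insert.prems(1) by (simp add: A'_def mult.commute)
    show "0 < (\<Sum>a\<in>I. \<Sum>b\<in>I. x a * A' a b * x b)" if "\<exists>a\<in>I. x a \<noteq> 0" for x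
      unfolding A'_def \<alpha>_def using insert.hyps insert.prems that by (rule Schur_complement_pos_on)
  qed
  then obtain v where v: "\<And>a b. a \<in> I \<Longrightarrow> b \<in> I \<Longrightarrow> A' a b = (\<Sum>k\<in>I. v k a * v k b)"
    by blast
  define w where "w k a = (if k = m then A m a / sqrt \<alpha> else if a = m then 0 else v k a)" for k a
  have "A a b = (\<Sum>k\<in>insert m I. w k a * w k b)" if "a \<in> insert m I" "b \<in> insert m I" for a b
  proof -
    have sum_w: "(\<Sum>k\<in>insert m I. w k a * w k b)
        = A m a * A m b / \<alpha> + (\<Sum>k\<in>I. (if a = m then 0 else v k a) * (if b = m then 0 else v k b))"
    proof -
      have "(\<Sum>k\<in>I. w k a * w k b)
          = (\<Sum>k\<in>I. (if a = m then 0 else v k a) * (if b = m then 0 else v k b))"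
        using insert.hyps(2) by (intro sum.cong) (auto simp: w_def)
      moreover have "w m a * w m b = A m a * A m b / \<alpha>"
        using \<open>0 < \<alpha>\<close> by (simp add: w_def real_sqrt_mult[symmetric])
      ultimately show ?thesis using insert.hyps by simp
    qed
    show ?thesis
    proof (cases "a = m \<or> b = m")
      case True
      then show ?thesis
        using sum_w that insert.prems(1)[of a m] \<open>0 < \<alpha>\<close> by (auto simp: \<alpha>_def)
    next
      case False
      then have "a \<in> I" "b \<in> I" using that by auto
      then show ?thesis
        using sum_w False v[of a b] insert.prems(1)[of a m] by (simp add: A'_def algebra_simps)
    qed
  qed
  then show ?case by blast
qed

lemma pos_def_Gram:
  fixes A :: "real^'n^'n"
  assumes "pos_def A"
  shows "\<exists>V :: real^'n^'n. A = V ** transpose V"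
proof -
  have "\<exists>v :: 'n \<Rightarrow> 'n \<Rightarrow> real. \<forall>a\<in>UNIV. \<forall>b\<in>UNIV. A $ a $ b = (\<Sum>k\<in>UNIV. v k a * v k b)"
  proof (rule Gram_decomposition_on)
    show "A $ a $ b = A $ b $ a" for a b by (rule pos_def_sym[OF assms])
    fix x :: "'n \<Rightarrow> real"
    assume "\<exists>a\<in>UNIV. x a \<noteq> 0"
    then have "vec_lambda x \<noteq> 0" by (auto simp: vec_eq_iff)
    then have "0 < vec_lambda x \<bullet> (A *v vec_lambda x)" using assms by (simp add: pos_def_def)
    then show "0 < (\<Sum>a\<in>UNIV. \<Sum>b\<in>UNIV. x a * A $ a $ b * x b)"
      by (simp add: inner_vec_def matrix_vector_mult_def sum_distrib_left mult.assoc)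
  qed simp
  then obtain v :: "'n \<Rightarrow> 'n \<Rightarrow> real" where "\<And>a b. A $ a $ b = (\<Sum>k\<in>UNIV. v k a * v k b)"
    by blast
  then have "A = (\<chi> a k. v k a) ** transpose (\<chi> a k. v k a)"
    by (simp add: vec_eq_iff matrix_matrix_mult_def transpose_def)
  then show ?thesis by blast
qed

lemma pos_def_det_pos:
  fixes K :: "real^'n^'n"
  assumes "pos_def K"
  shows "0 < det K"
proof -
  obtain V :: "real^'n^'n" where "K = V ** transpose V" using pos_def_Gram[OF assms] by blast
  then have "det K = (det V)\<^sup>2" by (simp add: det_mul power2_eq_square)
  moreover have "det K \<noteq> 0"
    using pos_def_invertible[OF assms] by (simp add: invertible_det_nz)
  ultimately show ?thesis by simp
qed

lemma pos_def_coercive: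
  fixes K :: "real^'n^'n"
  assumes "pos_def K"
  shows "\<exists>c>0. \<forall>x. c * (norm x)\<^sup>2 \<le> x \<bullet> (K *v x)"
proof -
  have "continuous_on (sphere 0 1) (\<lambda>x::real^'n. x \<bullet> (K *v x))"
    by (intro continuous_intros linear_continuous_on matrix_vector_mul_linear)
  moreover have "sphere (0::real^'n) 1 \<noteq> {}" by simp
  ultimately obtain u where u: "u \<in> sphere (0::real^'n) 1"
    and u_min: "\<And>y. y \<in> sphere 0 1 \<Longrightarrow> u \<bullet> (K *v u) \<le> y \<bullet> (K *v y)"
    using continuous_attains_inf[OF compact_sphere] by blast
  define c where "c = u \<bullet> (K *v u)"
  have "u \<noteq> 0" using u by auto
  then have "0 < c" using assms by (simp add: c_def pos_def_def)
  moreover have "c * (norm x)\<^sup>2 \<le> x \<bullet> (K *v x)" for x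
  proof (cases "x = 0")
    case False
    define y where "y = (1 / norm x) *\<^sub>R x"
    have "y \<in> sphere 0 1" using False by (simp add: y_def)
    then have "c \<le> y \<bullet> (K *v y)" using u_min by (simp add: c_def)
    moreover have "x \<bullet> (K *v x) = (norm x)\<^sup>2 * (y \<bullet> (K *v y))"
      using False by (simp add: y_def matrix_vector_mult_scaleR power2_eq_square)
    ultimately show ?thesis
      by (simp add: mult.commute[of c] mult_left_mono)
  qed simp
  ultimately show ?thesis by blast
qed

lemma pos_def_add_scaled:
  fixes K H :: "real^'n^'n"
  assumes K: "pos_def K" and H: "transpose H = H"
  shows "\<exists>d>0. \<forall>t. \<bar>t\<bar> < d \<longrightarrow> pos_def (K + t *\<^sub>R H)"
proof -
  obtain c where "c > 0" and c: "\<And>x. c * (norm x)\<^sup>2 \<le> x \<bullet> (K *v x)"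
    using pos_def_coercive[OF K] by blast
  obtain B where "B > 0" and B: "\<And>x. norm (H *v x) \<le> norm x * B"
    using bounded_linear.pos_bounded[OF matrix_vector_mul_bounded_linear] by blast
  have "pos_def (K + t *\<^sub>R H)" if t: "\<bar>t\<bar> < c / B" for t
    unfolding pos_def_def
  proof (intro conjI allI impI)
    show "transpose (K + t *\<^sub>R H) = K + t *\<^sub>R H"
      using K H by (simp add: pos_def_def transpose_def vec_eq_iff)
    fix x :: "real^'n"
    assume "x \<noteq> 0"
    have "\<bar>x \<bullet> (H *v x)\<bar> \<le> norm x * norm (H *v x)" by (rule Cauchy_Schwarz_ineq2)
    also have "\<dots> \<le> B * (norm x)\<^sup>2"
      using mult_left_mono[OF B[of x], of "norm x"] by (simp add: power2_eq_square mult_ac)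
    finally have "\<bar>t * (x \<bullet> (H *v x))\<bar> \<le> (\<bar>t\<bar> * B) * (norm x)\<^sup>2"
      by (simp add: abs_mult mult_left_mono mult.assoc)
    also have "\<dots> < c * (norm x)\<^sup>2"
      using t \<open>B > 0\<close> \<open>x \<noteq> 0\<close> by (simp add: pos_less_divide_eq)
    moreover have "x \<bullet> ((K + t *\<^sub>R H) *v x) = x \<bullet> (K *v x) + t * (x \<bullet> (H *v x))"
      by (simp add: matrix_vector_mult_add_rdistrib scaleR_matrix_vector_assoc[symmetric] inner_add_right)
    ultimately show "0 < x \<bullet> ((K + t *\<^sub>R H) *v x)"
      using c[of x] by (simp add: abs_less_iff)
  qed
  then show ?thesis using \<open>c > 0\<close> \<open>B > 0\<close> by (intro exI[of _ "c / B"]) auto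
qed

section \<open>Uniqueness of the maximum likelihood estimator\<close>

lemma matrix_diff_ldistrib: "(A :: real^'n^'m) ** (B - C) = A ** B - A ** C"
  by (simp add: matrix_matrix_mult_def vec_eq_iff algebra_simps sum_subtractf)

lemma matrix_diff_rdistrib: "((A :: real^'n^'m) - B) ** C = A ** C - B ** C"
  by (simp add: matrix_matrix_mult_def vec_eq_iff algebra_simps sum_subtractf)

lemma matrix_inv_diff:
  fixes A B :: "real^'n^'n"
  assumes "invertible A" and "invertible B"
  shows "matrix_inv A - matrix_inv B = matrix_inv A ** (B - A) ** matrix_inv B"
  by (simp add: matrix_diff_ldistrib matrix_diff_rdistrib matrix_mul_assoc[symmetric]
      matrix_inv_right[OF assms(2)] matrix_inv_left[OF assms(1)])

lemma trace_transpose_mult: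
  fixes X Y :: "real^'n^'n"
  shows "trace (transpose X ** Y) = (\<Sum>a\<in>UNIV. \<Sum>b\<in>UNIV. X $ a $ b * Y $ a $ b)"
  unfolding trace_def matrix_matrix_mult_def transpose_def by simp (subst sum.swap, simp)

lemma trace_congruence_pos_def:
  fixes P Q D :: "real^'n^'n"
  assumes P: "pos_def P" and Q: "pos_def Q" and "D \<noteq> 0"
  shows "0 < trace (transpose D ** P ** D ** Q)"
proof -
  obtain V :: "real^'n^'n" where V: "P = V ** transpose V" using pos_def_Gram[OF P] by blast
  define U where "U = transpose V ** D"
  have "U \<noteq> 0"
  proof
    assume "U = 0"
    moreover have "P ** D = V ** U" by (simp add: V U_def matrix_mul_assoc)
    ultimately have "P ** D = 0" by simp
    moreover have "D = matrix_inv P ** (P ** D)"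
      by (simp add: matrix_mul_assoc matrix_inv_left[OF pos_def_invertible[OF P]])
    ultimately show False using \<open>D \<noteq> 0\<close> by simp
  qed
  then obtain k where "U $ k \<noteq> 0" by (auto simp: vec_eq_iff)
  have diag: "(U ** Q ** transpose U) $ a $ a = U $ a \<bullet> (Q *v U $ a)" for a
    unfolding matrix_matrix_mult_def transpose_def inner_vec_def matrix_vector_mult_def
    by (simp add: sum_distrib_left sum_distrib_right mult_ac) (subst sum.swap, simp add: mult_ac)
  have "trace (transpose D ** P ** D ** Q) = trace ((transpose D ** V) ** (transpose V ** D ** Q))"
    by (simp add: V matrix_mul_assoc)
  also have "\<dots> = trace ((transpose V ** D ** Q) ** (transpose D ** V))"
    by (rule trace_mul_sym)
  also have "\<dots> = trace (U ** Q ** transpose U)"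
    by (simp add: U_def matrix_transpose_mul matrix_mul_assoc)
  also have "\<dots> = (\<Sum>a\<in>UNIV. U $ a \<bullet> (Q *v U $ a))" by (simp add: trace_def diag)
  also have "0 < \<dots>"
  proof (rule sum_pos2)
    show "0 < U $ k \<bullet> (Q *v U $ k)" using Q \<open>U $ k \<noteq> 0\<close> by (simp add: pos_def_def)
    show "0 \<le> U $ a \<bullet> (Q *v U $ a)" for a
      using Q by (cases "U $ a = 0") (auto simp: pos_def_def less_imp_le)
  qed auto
  finally show ?thesis .
qed

lemma ggm_mle_cond_unique:
  assumes "ggm_mle_cond E T K" and "ggm_mle_cond E T K'"
  shows "K' = K"
proof (rule ccontr)
  define D where "D = K' - K"
  define P where "P = matrix_inv K"
  define Q where "Q = matrix_inv K'"
  have K: "pos_def K" and K': "pos_def K'" using assms by (simp_all add: ggm_mle_cond_def)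
  have "P ** D ** Q = P - Q"
    unfolding D_def P_def Q_def
    by (rule matrix_inv_diff[OF pos_def_invertible[OF K] pos_def_invertible[OF K'], symmetric])
  then have entry: "D $ a $ b * (P ** D ** Q) $ a $ b = 0" for a b
    using assms by (cases "a = b \<or> (a, b) \<in> E") (auto simp: ggm_mle_cond_def D_def P_def Q_def)
  have "trace (transpose D ** (P ** D ** Q)) = 0"
    unfolding trace_transpose_mult entry by simp
  then have "trace (transpose D ** P ** D ** Q) = 0"
    by (simp add: matrix_mul_assoc)
  moreover assume "K' \<noteq> K"
  then have "0 < trace (transpose D ** P ** D ** Q)"
    by (simp add: D_def P_def Q_def trace_congruence_pos_def pos_def_matrix_inv K K')
  ultimately show False by simp
qed

section \<open>Stationarity of the positive graphical lasso\<close>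

definition sym_unit :: "'n \<Rightarrow> 'n \<Rightarrow> real^'n^'n" where
  "sym_unit i j = (\<chi> r c. of_bool (r = i \<and> c = j \<or> r = j \<and> c = i))"

lemma transpose_sym_unit: "transpose (sym_unit i j) = sym_unit i j"
  by (auto simp: sym_unit_def transpose_def vec_eq_iff)

lemma trace_mult_sym_unit:
  fixes A :: "real^'n^'n"
  shows "trace (A ** sym_unit i j) = (if i = j then A $ i $ i else A $ i $ j + A $ j $ i)"
proof -
  have "(A ** sym_unit i j) $ a $ a = (if a = j then A $ a $ i else 0) + (if a = i \<and> i \<noteq> j then A $ a $ j else 0)"
    for a
    by (cases "a = i"; cases "a = j") (simp_all add: matrix_matrix_mult_def sym_unit_def)
  then show ?thesis by (simp add: trace_def sum.distrib)
qed

lemma det_add_scaled_row: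
  fixes M :: "real^'n^'n"
  shows "det (\<chi> r. if r = k then M $ r + t *s w else M $ r)
    = det M + t * det (\<chi> r. if r = k then w else M $ r)"
  using det_row_add[of k "\<lambda>r. M $ r" "\<lambda>_. t *s w" "\<lambda>r. M $ r"] det_row_mul[of k t "\<lambda>_. w" "\<lambda>r. M $ r"]
  by (simp add: vec_lambda_eta)

lemma det_replace_row_axis:
  fixes K :: "real^'n^'n"
  assumes "invertible K"
  shows "det (\<chi> r. if r = k then axis l 1 else K $ r) = det K * matrix_inv K $ l $ k"
proof -
  define x where "x = transpose (matrix_inv K) *v axis l 1"
  have inv_transpose: "transpose K ** transpose (matrix_inv K) = mat 1"
    by (metis matrix_inv_left[OF assms] matrix_transpose_mul transpose_mat)
  have "transpose K *v x = axis l 1"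
    unfolding x_def matrix_vector_mul_assoc inv_transpose by simp
  then have replaced: "(\<chi> i j. if j = k then (transpose K *v x) $ i else transpose K $ i $ j)
      = transpose (\<chi> r. if r = k then axis l 1 else K $ r)"
    by (simp add: transpose_def vec_eq_iff)
  have "x $ k * det (transpose K)
      = det (\<chi> i j. if j = k then (transpose K *v x) $ i else transpose K $ i $ j)"
    by (rule cramer_lemma[symmetric])
  then have "x $ k * det K = det (\<chi> r. if r = k then axis l 1 else K $ r)"
    unfolding replaced det_transpose .
  moreover have "x $ k = matrix_inv K $ l $ k"
    by (simp add: x_def matrix_vector_mult_basis column_def transpose_def)
  ultimately show ?thesis by (simp add: mult.commute)
qed

lemma det_add_sym_unit:
  fixes K :: "real^'n^'n"
  assumes "invertible K"
  shows "\<exists>c. \<forall>t. det (K + t *\<^sub>R sym_unit i j)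
    = det K + t * (det K * trace (matrix_inv K ** sym_unit i j)) + t\<^sup>2 * c"
proof (cases "i = j")
  case True
  have "K + t *\<^sub>R sym_unit i j = (\<chi> r. if r = i then K $ r + t *s axis i 1 else K $ r)" for t
    using True by (auto simp: vec_eq_iff sym_unit_def axis_def)
  then show ?thesis
    using True by (simp only: det_add_scaled_row det_replace_row_axis[OF assms] trace_mult_sym_unit) simp
next
  case False
  define c where "c = det (\<chi> r. if r = i then axis j 1 else if r = j then axis i 1 else K $ r)"
  have "det (K + t *\<^sub>R sym_unit i j)
      = det K + t * (det K * trace (matrix_inv K ** sym_unit i j)) + t\<^sup>2 * c" for t
  proof -
    define M where "M = (\<chi> r. if r = i then K $ r + t *s axis j 1 else K $ r)"
    define N where "N = (\<chi> r. if r = j then axis i 1 else K $ r)"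
    have "K + t *\<^sub>R sym_unit i j = (\<chi> r. if r = j then M $ r + t *s axis i 1 else M $ r)"
      using False by (auto simp: vec_eq_iff sym_unit_def axis_def M_def)
    then have "det (K + t *\<^sub>R sym_unit i j) = det M + t * det (\<chi> r. if r = j then axis i 1 else M $ r)"
      by (simp only: det_add_scaled_row)
    also have "(\<chi> r. if r = j then axis i 1 else M $ r) = (\<chi> r. if r = i then N $ r + t *s axis j 1 else N $ r)"
      using False by (auto simp: vec_eq_iff M_def N_def)
    also have "det \<dots> = det N + t * c"
    proof -
      have "(\<chi> r. if r = i then axis j 1 else N $ r)
          = (\<chi> r. if r = i then axis j 1 else if r = j then axis i 1 else K $ r)"
        by (simp add: N_def vec_eq_iff)
      then show ?thesis by (simp only: det_add_scaled_row c_def)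
    qed
    finally have "det (K + t *\<^sub>R sym_unit i j) = det M + t * (det N + t * c)" .
    moreover have "det M = det K + t * (det K * matrix_inv K $ j $ i)"
      by (simp only: M_def det_add_scaled_row det_replace_row_axis[OF assms])
    moreover have "det N = det K * matrix_inv K $ i $ j"
      unfolding N_def by (rule det_replace_row_axis[OF assms])
    ultimately show ?thesis
      using False by (simp add: trace_mult_sym_unit power2_eq_square algebra_simps)
  qed
  then show ?thesis by blast
qed

lemma has_real_derivative_ln_det_sym_unit:
  fixes K :: "real^'n^'n"
  assumes "0 < det K"
  shows "((\<lambda>t. ln (det (K + t *\<^sub>R sym_unit i j))) has_real_derivative
    trace (matrix_inv K ** sym_unit i j)) (at 0)"
proof -
  have "invertible K" using assms by (simp add: invertible_det_nz)
  then obtain c where c: "\<And>t. det (K + t *\<^sub>R sym_unit i j)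
      = det K + t * (det K * trace (matrix_inv K ** sym_unit i j)) + t\<^sup>2 * c"
    using det_add_sym_unit by blast
  have "((\<lambda>t. ln (det K + t * (det K * trace (matrix_inv K ** sym_unit i j)) + t\<^sup>2 * c))
      has_real_derivative trace (matrix_inv K ** sym_unit i j)) (at 0)"
    using assms by (auto intro!: derivative_eq_intros)
  then show ?thesis by (simp only: c)
qed

definition pglasso_penalty :: "real^'n^'n \<Rightarrow> real" where
  "pglasso_penalty K = (\<Sum>i\<in>UNIV. \<Sum>j\<in>UNIV. if i \<noteq> j then max 0 (K $ i $ j) else 0)"

lemma pglasso_obj_eq:
  "pglasso_obj S \<rho> K = - ln (det K) + trace (S ** K) + \<rho> * pglasso_penalty K"
  by (simp add: pglasso_obj_def pglasso_penalty_def)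

lemma pglasso_penalty_add_sym_unit:
  fixes K :: "real^'n^'n"
  assumes sym: "K $ j $ i = K $ i $ j" and small: "i = j \<or> \<bar>t\<bar> < \<bar>K $ i $ j\<bar>"
  shows "pglasso_penalty (K + t *\<^sub>R sym_unit i j)
    = pglasso_penalty K + t * (if i \<noteq> j \<and> 0 < K $ i $ j then 2 else 0)"
proof -
  define c :: real where "c = (if i \<noteq> j \<and> 0 < K $ i $ j then 1 else 0)"
  have max_shift: "max 0 (K $ i $ j + t) = max 0 (K $ i $ j) + t * c" if "i \<noteq> j"
    using small that by (auto simp: c_def max_def abs_less_iff)
  have entry: "(if a \<noteq> b then max 0 ((K + t *\<^sub>R sym_unit i j) $ a $ b) else 0)
      = (if a \<noteq> b then max 0 (K $ a $ b) else 0)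
        + (if a = i \<and> b = j then t * c else 0) + (if a = j \<and> b = i then t * c else 0)" for a b
  proof (cases "a = i \<and> b = j \<or> a = j \<and> b = i")
    case True
    then show ?thesis
      using max_shift sym by (cases "i = j") (auto simp: sym_unit_def c_def)
  next
    case False
    then have "(K + t *\<^sub>R sym_unit i j) $ a $ b = K $ a $ b" by (auto simp: sym_unit_def)
    moreover have "\<not> (a = i \<and> b = j)" "\<not> (a = j \<and> b = i)" using False by auto
    ultimately show ?thesis by (simp only: if_False add_0_right)
  qed
  have "pglasso_penalty (K + t *\<^sub>R sym_unit i j)
      = pglasso_penalty K + (\<Sum>a\<in>UNIV. \<Sum>b\<in>UNIV. if a = i \<and> b = j then t * c else 0)
        + (\<Sum>a\<in>UNIV. \<Sum>b\<in>UNIV. if a = j \<and> b = i then t * c else 0)"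
    unfolding pglasso_penalty_def entry by (simp add: sum.distrib)
  also have "\<dots> = pglasso_penalty K + t * (2 * c)"
  proof -
    have "(\<Sum>b\<in>UNIV. if a = p \<and> b = q then t * c else 0) = (if a = p then t * c else 0)" for a p q :: 'n
      by (cases "a = p") simp_all
    then show ?thesis by simp
  qed
  finally show ?thesis by (simp add: c_def)
qed

lemma pglasso_minimizer_stationary:
  fixes S K :: "real^'n^'n"
  assumes minimizer: "is_pglasso_minimizer S \<rho> K" and ij: "i = j \<or> K $ i $ j \<noteq> 0"
  shows "trace (matrix_inv K ** sym_unit i j)
    = trace (S ** sym_unit i j) + \<rho> * (if i \<noteq> j \<and> 0 < K $ i $ j then 2 else 0)"
proof -
  let ?H = "sym_unit i j :: real^'n^'n"
  define c :: real where "c = (if i \<noteq> j \<and> 0 < K $ i $ j then 2 else 0)"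
  have K: "pos_def K" using minimizer by (simp add: is_pglasso_minimizer_def)
  obtain d1 where "0 < d1" and pos_near: "\<And>t. \<bar>t\<bar> < d1 \<Longrightarrow> pos_def (K + t *\<^sub>R ?H)"
    using pos_def_add_scaled[OF K transpose_sym_unit] by blast
  \<comment> \<open>Off the diagonal, the penalty is linear in t only while the sign of the entry is kept.\<close>
  define d where "d = (if i = j then d1 else min d1 \<bar>K $ i $ j\<bar>)"
  have "0 < d" using \<open>0 < d1\<close> ij by (auto simp: d_def)
  define L where "L t = ln (det (K + t *\<^sub>R ?H))" for t
  define g where "g t = - L t + trace (S ** K) + t * trace (S ** ?H) + \<rho> * (pglasso_penalty K + t * c)"
    for t
  have obj_g: "pglasso_obj S \<rho> (K + t *\<^sub>R ?H) = g t" if "\<bar>t\<bar> < d" for t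
  proof -
    have "trace (S ** (K + t *\<^sub>R ?H)) = trace (S ** K) + t * trace (S ** ?H)"
      by (simp add: trace_def matrix_matrix_mult_def algebra_simps sum.distrib sum_distrib_left)
    moreover have "pglasso_penalty (K + t *\<^sub>R ?H) = pglasso_penalty K + t * c"
      unfolding c_def using that ij
      by (intro pglasso_penalty_add_sym_unit pos_def_sym[OF K]) (auto simp: d_def split: if_splits)
    ultimately show ?thesis by (simp add: pglasso_obj_eq g_def L_def)
  qed
  have "g 0 \<le> g t" if "\<bar>0 - t\<bar> < d" for t
  proof -
    have "\<bar>t\<bar> < d1" using that by (auto simp: d_def split: if_splits)
    then have "pglasso_obj S \<rho> K \<le> pglasso_obj S \<rho> (K + t *\<^sub>R ?H)"
      using minimizer pos_near by (simp add: is_pglasso_minimizer_def)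
    then show ?thesis using obj_g[of 0] obj_g[of t] that \<open>0 < d\<close> by simp
  qed
  moreover have "(g has_real_derivative
      - trace (matrix_inv K ** ?H) + trace (S ** ?H) + \<rho> * c) (at 0)"
  proof -
    have "(L has_real_derivative trace (matrix_inv K ** ?H)) (at 0)"
      unfolding L_def by (rule has_real_derivative_ln_det_sym_unit[OF pos_def_det_pos[OF K]])
    then show ?thesis unfolding g_def by (auto intro!: derivative_eq_intros)
  qed
  ultimately have "- trace (matrix_inv K ** ?H) + trace (S ** ?H) + \<rho> * c = 0"
    using DERIV_local_min \<open>0 < d\<close> by blast
  then show ?thesis by (simp add: c_def)
qed

lemma pglasso_minimizer_ggm_mle_cond:
  fixes S K :: "real^'n^'n"
  assumes minimizer: "is_pglasso_minimizer S \<rho> K" and S: "transpose S = S"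
  shows "ggm_mle_cond (supp_edges K) (mod_cov S \<rho> K) K"
  unfolding ggm_mle_cond_def
proof (intro conjI allI impI)
  have K: "pos_def K" using minimizer by (simp add: is_pglasso_minimizer_def)
  then show "pos_def K" .
  show "K $ i $ j = 0" if "i \<noteq> j \<and> (i, j) \<notin> supp_edges K" for i j
    using that by (auto simp: supp_edges_def)
  fix i j
  assume "i = j \<or> (i, j) \<in> supp_edges K"
  then have ij: "i = j \<or> K $ i $ j \<noteq> 0" by (auto simp: supp_edges_def)
  have "S $ j $ i = S $ i $ j" using S by (rule transpose_eq_self_sym)
  moreover have "matrix_inv K $ j $ i = matrix_inv K $ i $ j"
    by (rule pos_def_sym[OF pos_def_matrix_inv[OF K]])
  ultimately show "matrix_inv K $ i $ j = mod_cov S \<rho> K $ i $ j"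
    using pglasso_minimizer_stationary[OF minimizer ij] ij
    by (auto simp: trace_mult_sym_unit mod_cov_def split: if_splits)
qed

lemma transpose_sample_cov: "transpose (sample_cov N X) = sample_cov N X"
  by (simp add: sample_cov_def transpose_def vec_eq_iff mult.commute)

theorem corollary7p1:
  fixes X :: "nat \<Rightarrow> real^'n" and N :: nat and S Khat :: "real^'n^'n" and \<rho> :: real
  assumes "N \<ge> 1"
    and "S = sample_cov N X"
    and "\<rho> \<ge> 0"
    and "is_pglasso_minimizer S \<rho> Khat"
  shows "is_ggm_mle (supp_edges Khat) (mod_cov S \<rho> Khat) Khat"
proof -
  have "ggm_mle_cond (supp_edges Khat) (mod_cov S \<rho> Khat) Khat"
    using assms(4) by (rule pglasso_minimizer_ggm_mle_cond) (simp add: assms(2) transpose_sample_cov)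
  then show ?thesis
    unfolding is_ggm_mle_def using ggm_mle_cond_unique by blast
qed

end
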